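(* Let $\mathcal{A}$ be a complete deterministic one-clock timed automaton over the alphabet $\Sigma$, and let $\textsf{MQ}$ be the membership function of $L(\mathcal{A})$, i.e. $\textsf{MQ}(\omega)=+$ if $\omega\in L(\mathcal{A})$ and $\textsf{MQ}(\omega)=-$ otherwise. Let $\omega_1,\omega_2$ be timed words, $e$ a timed word (the suffix), and $i_1,i_2$ natural numbers such that $i_1=k_{\mathcal{A}}(\omega_1)$ and $i_2=k_{\mathcal{A}}(\omega_2)$. If the test $T(\omega_1,\omega_2,i_1,i_2,e)=\bot$, then the runs of $\mathcal{A}$ on $\omega_1$ and on $\omega_2$ end in different locations of $\mathcal{A}$.
   Context: A one-clock timed automaton (OTA) is a tuple $\mathcal{A}=(\Sigma,Q,q_0,F,c,\Delta)$ with finite alphabet $\Sigma$, finite location set $Q$, initial location $q_0$, accepting locations $F\subseteq Q$, a single clock $c$, and finite transition set $\Delta\subseteq Q\times\Sigma\times\Phi_c\times\{\top,\bot\}\times Q$, where a guard in $\Phi_c$ is an interval of $\mathbb{R}_{\ge 0}$ with endpoints in $\mathbb{N}\cup\{\infty\}$. A timed word is $\omega=(\sigma_1,t_1)\cdots(\sigma_n,t_n)$ with $\sigma_i\in\Sigma$, $t_i\in\mathbb{R}_{\ge0}$ ($t_i$ is the delay before $\sigma_i$); $|\omega|=n$. A run on $\omega$ is $(q_0,\nu_0)\to(q_1,\nu_1)\to\cdots\to(q_n,\nu_n)$ with $\nu_0=0$, where for each $i$ there is a transition $(q_{i-1},\sigma_i,\phi_i,b_i,q_i)\in\Delta$ with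 $\nu_{i-1}+t_i\in\phi_i$, and $\nu_i=0$ if $b_i=\top$, $\nu_i=\nu_{i-1}+t_i$ otherwise; $\omega$ is accepted if $q_n\in F$. The OTA is deterministic (DOTA) if guards of transitions from the same location with the same action are pairwise disjoint, and complete if for each location and action these guards partition $\mathbb{R}_{\ge0}$ (so each timed word has exactly one run). The last reset $k_{\mathcal{A}}(\omega)$ is $0$ if $b_i=\bot$ for all $i$ in the run of $\omega$, and otherwise the largest $i$ with $b_i=\top$. For a timed word $\omega$ of length $n$ and $0\le i\le n$, let $\nu_c(\omega,i)=\sum_{j=i+1}^{n}t_j$ (equal to $0$ if $i=n$). The test $T(\omega_1,\omega_2,i_1,i_2,e)$ is defined as follows. If $e$ is empty, $T=\top$ iff $\textsf{MQ}(\omega_1)=\textsf{MQ}(\omega_2)$. If $e=(\sigma_1,t_1)(\sigma_2,t_2)\cdots(\sigma_m,t_m)$ is nonempty, let $\nu_1=\nu_c(\omega_1,i_1)$, $\nu_2=\nu_c(\omega_2,i_2)$; if $\nu_1>\nu_2$ put $e_1=e$ and $e_2=(\sigma_1,t_1+(\nu_1-\nu_2))(\sigma_2,t_2)\cdots(\sigma_m,t_m)$; if $\nu_1<\nu_2$ put $e_1=(\sigma_1,t_1+(\nu_2-\nu_1))(\sigma_2,t_2)\cdots(\sigma_m,t_m)$ and $e_2=e$; if $\nu_1=\nu_2$ put $e_1=e_2=e$. Then $T=\top$ iff $\textsf{MQ}(\omega_1\cdot e_1)=\textsf{MQ}(\omega_2\cdot e_2)$, and $T=\bot$ otherwise. 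*)

theory Defs
  imports Complex_Main
begin

text \<open>Guard lo lo_closed hi hi_closed: lower endpoint lo (closed iff lo_closed),
  upper endpoint hi (None = \<infinity>, always open then; Some h closed iff hi_closed).\<close>
datatype guard = Guard nat bool "nat option" bool

fun in_guard :: "real \<Rightarrow> guard \<Rightarrow> bool" where
  "in_guard x (Guard lo lc hi hc) =
     ((if lc then real lo \<le> x else real lo < x) \<and>
      (case hi of None \<Rightarrow> True | Some h \<Rightarrow> (if hc then x \<le> real h else x < real h)))"

text \<open>A transition (q, \<sigma>, \<phi>, b, q'); b = True means the clock is reset.\<close>
type_synonym ('s, 'q) transition = "'q \<times> 's \<times> guard \<times> bool \<times> 'q"

record ('s, 'q) ota =
  alph  :: "'s set"
  locs  :: "'q set"
  init  :: "'q"
  final :: "'q set"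
  trans :: "('s, 'q) transition set"

type_synonym 's timed_word = "('s \<times> real) list"

definition wf_ota :: "('s, 'q) ota \<Rightarrow> bool" where
  "wf_ota A \<longleftrightarrow> finite (alph A) \<and> finite (locs A) \<and> init A \<in> locs A \<and>
     final A \<subseteq> locs A \<and> finite (trans A) \<and>
     (\<forall>(q, \<sigma>, \<phi>, b, q') \<in> trans A. q \<in> locs A \<and> \<sigma> \<in> alph A \<and> q' \<in> locs A)"

definition deterministic :: "('s, 'q) ota \<Rightarrow> bool" where
  "deterministic A \<longleftrightarrow>
     (\<forall>tr1 \<in> trans A. \<forall>tr2 \<in> trans A.
        case (tr1, tr2) of ((q1, \<sigma>1, \<phi>1, b1, p1), (q2, \<sigma>2, \<phi>2, b2, p2)) \<Rightarrow>
          (q1 = q2 \<and> \<sigma>1 = \<sigma>2 \<and> tr1 \<noteq> tr2) \<longrightarrow> (\<forall>x. \<not> (in_guard x \<phi>1 \<and> in_guard x \<phi>2)))"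

definition complete :: "('s, 'q) ota \<Rightarrow> bool" where
  "complete A \<longleftrightarrow>
     (\<forall>q \<in> locs A. \<forall>\<sigma> \<in> alph A. \<forall>x::real. x \<ge> 0 \<longrightarrow>
        (\<exists>\<phi> b q'. (q, \<sigma>, \<phi>, b, q') \<in> trans A \<and> in_guard x \<phi>))"

definition complete_DOTA :: "('s, 'q) ota \<Rightarrow> bool" where
  "complete_DOTA A \<longleftrightarrow> wf_ota A \<and> deterministic A \<and> complete A"

definition is_timed_word :: "('s, 'q) ota \<Rightarrow> 's timed_word \<Rightarrow> bool" where
  "is_timed_word A w \<longleftrightarrow> (\<forall>(\<sigma>, t) \<in> set w. \<sigma> \<in> alph A \<and> t \<ge> 0)"

text \<open>run A w q \<nu> k: there is a run of A on w ending in configuration (q, \<nu>)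
  whose last reset index is k (0 if no reset occurred).\<close>
inductive run :: "('s, 'q) ota \<Rightarrow> 's timed_word \<Rightarrow> 'q \<Rightarrow> real \<Rightarrow> nat \<Rightarrow> bool"
  for A where
  run_Nil: "run A [] (init A) 0 0"
| run_snoc: "\<lbrakk> run A w q \<nu> k; (q, \<sigma>, \<phi>, b, q') \<in> trans A; in_guard (\<nu> + t) \<phi> \<rbrakk>
     \<Longrightarrow> run A (w @ [(\<sigma>, t)]) q' (if b then 0 else \<nu> + t) (if b then length w + 1 else k)"

definition MQ :: "('s, 'q) ota \<Rightarrow> 's timed_word \<Rightarrow> bool" where
  "MQ A w \<longleftrightarrow> (\<exists>q \<nu> k. run A w q \<nu> k \<and> q \<in> final A)"

definition nu_c :: "'s timed_word \<Rightarrow> nat \<Rightarrow> real" where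
  "nu_c w i = (\<Sum>j = i+1..length w. snd (w ! (j - 1)))"

fun shift_first :: "real \<Rightarrow> 's timed_word \<Rightarrow> 's timed_word" where
  "shift_first d [] = []"
| "shift_first d ((\<sigma>, t) # e) = (\<sigma>, t + d) # e"

definition test :: "('s, 'q) ota \<Rightarrow> 's timed_word \<Rightarrow> 's timed_word \<Rightarrow> nat \<Rightarrow> nat \<Rightarrow> 's timed_word \<Rightarrow> bool" where
  "test A w1 w2 i1 i2 e =
    (if e = [] then MQ A w1 = MQ A w2
     else (let v1 = nu_c w1 i1; v2 = nu_c w2 i2;
               e1 = (if v1 < v2 then shift_first (v2 - v1) e else e);
               e2 = (if v1 > v2 then shift_first (v1 - v2) e else e)
           in MQ A (w1 @ e1) = MQ A (w2 @ e2)))"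

end

theory Submission
  imports Defs
begin

(* In a deterministic automaton the run on a word is unique, so membership of w @ u depends only
   on the configuration (location, clock value) reached after w; for u = [] only the location
   matters.  The clock value after w is the time elapsed since the last reset k, i.e. nu_c w k.
   If both words reach the same location, the test delays the first letter of e on the word with
   the smaller clock value by exactly the difference, so after that letter both extended words are
   in the same configuration and get the same membership answer: the test succeeds. *)

inductive_cases run_snocE [consumes 1, case_names last_step]: "run A (w @ [(\<sigma>, t)]) q \<nu> k"

lemma run_deterministic:
  assumes "deterministic A"
  shows "run A w q \<nu> k \<Longrightarrow> run A w q' \<nu>' k' \<Longrightarrow> q' = q \<and> \<nu>' = \<nu> \<and> k' = k"
proof (induction arbitrary: q' \<nu>' k' rule: run.induct)
  case run_Nil
  then show ?case by (cases rule: run.cases) auto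
next
  case (run_snoc w q \<nu> k \<sigma> \<phi> b q2 t)
  from run_snoc.prems show ?case
  proof (cases rule: run_snocE)
    case (last_step q0 \<nu>0 k0 \<phi>' b')
    with run_snoc.IH have same: "q0 = q" "\<nu>0 = \<nu>" "k0 = k" by auto
    have "(q, \<sigma>, \<phi>, b, q2) = (q, \<sigma>, \<phi>', b', q')"
    proof (rule ccontr)
      assume "(q, \<sigma>, \<phi>, b, q2) \<noteq> (q, \<sigma>, \<phi>', b', q')"
      with assms run_snoc.hyps(2) last_step same
      have "\<not> (in_guard (\<nu> + t) \<phi> \<and> in_guard (\<nu> + t) \<phi>')"
        unfolding deterministic_def by fastforce
      with run_snoc.hyps(3) last_step same show False by auto
    qed
    with last_step same show ?thesis by auto
  qed
qed

lemma run_last_reset_le_length: "run A w q \<nu> k \<Longrightarrow> k \<le> length w"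
  by (induction rule: run.induct) auto

lemma run_clock_eq_nu_c: "run A w q \<nu> k \<Longrightarrow> \<nu> = nu_c w k"
proof (induction rule: run.induct)
  case run_Nil
  then show ?case by (simp add: nu_c_def)
next
  case (run_snoc w q \<nu> k \<sigma> \<phi> b q' t)
  have "nu_c (w @ [(\<sigma>, t)]) k = (\<Sum>j = k+1..length w. snd ((w @ [(\<sigma>, t)]) ! (j - 1))) + t"
    using run_last_reset_le_length[OF run_snoc.hyps(1)] by (simp add: nu_c_def nth_append)
  also have "(\<Sum>j = k+1..length w. snd ((w @ [(\<sigma>, t)]) ! (j - 1))) = nu_c w k"
    unfolding nu_c_def by (rule sum.cong) (auto simp: nth_append)
  finally have "nu_c (w @ [(\<sigma>, t)]) k = nu_c w k + t" .
  moreover have "nu_c (w @ [(\<sigma>, t)]) (length w + 1) = 0"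
    by (simp add: nu_c_def)
  ultimately show ?case using run_snoc.IH by simp
qed

lemma run_appendD: "run A (w @ u) q \<nu> k \<Longrightarrow> \<exists>q0 \<nu>0 k0. run A w q0 \<nu>0 k0"
proof (induction u arbitrary: q \<nu> k rule: rev_induct)
  case Nil
  then show ?case by auto
next
  case (snoc x u)
  then show ?case by (cases x) (metis append_assoc run_snocE)
qed

lemma run_append_same_configuration:
  assumes det: "deterministic A"
    and r1: "run A w1 q \<nu> k1" and r2: "run A w2 q \<nu> k2"
  shows "run A (w1 @ u) q' \<nu>' k \<Longrightarrow> \<exists>k'. run A (w2 @ u) q' \<nu>' k'"
proof (induction u arbitrary: q' \<nu>' k rule: rev_induct)
  case Nil
  with run_deterministic[OF det r1] r2 show ?case by auto
next
  case (snoc x u)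
  obtain \<sigma> t where x: "x = (\<sigma>, t)" by (cases x)
  from snoc.prems x have "run A ((w1 @ u) @ [(\<sigma>, t)]) q' \<nu>' k" by simp
  then show ?case
  proof (cases rule: run_snocE)
    case (last_step q0 \<nu>0 k0 \<phi> b)
    with snoc.IH obtain k0' where "run A (w2 @ u) q0 \<nu>0 k0'" by blast
    from run.run_snoc[OF this last_step(4,5)] last_step(1) x show ?thesis by auto
  qed
qed

lemma run_snoc_delay_compensates_clock:
  assumes det: "deterministic A"
    and r1: "run A w1 q a k1" and r2: "run A w2 q b k2" and clocks: "a + d1 = b + d2"
    and "run A (w1 @ [(\<sigma>, t + d1)]) q' \<nu> k"
  shows "\<exists>k'. run A (w2 @ [(\<sigma>, t + d2)]) q' \<nu> k'"
  using assms(5)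
proof (cases rule: run_snocE)
  case (last_step q0 \<nu>0 k0 \<phi> reset)
  with run_deterministic[OF det r1] have "q0 = q" "\<nu>0 = a" by auto
  moreover have clock: "b + (t + d2) = a + (t + d1)" using clocks by simp
  ultimately have "in_guard (b + (t + d2)) \<phi>" "\<nu> = (if reset then 0 else b + (t + d2))"
    using last_step unfolding clock by auto
  with run.run_snoc[OF r2 last_step(4)[unfolded \<open>q0 = q\<close>]] show ?thesis by blast
qed

lemma run_shift_first_transfer:
  assumes det: "deterministic A"
    and r1: "run A w1 q a k1" and r2: "run A w2 q b k2" and clocks: "a + d1 = b + d2"
    and "u \<noteq> []" and r: "run A (w1 @ shift_first d1 u) q' \<nu> k"
  shows "\<exists>k'. run A (w2 @ shift_first d2 u) q' \<nu> k'"
proof -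
  obtain \<sigma> t u' where u: "u = (\<sigma>, t) # u'"
    using \<open>u \<noteq> []\<close> by (cases u) auto
  from r u have r': "run A ((w1 @ [(\<sigma>, t + d1)]) @ u') q' \<nu> k" by simp
  then obtain p c m where "run A (w1 @ [(\<sigma>, t + d1)]) p c m"
    by (blast dest: run_appendD)
  moreover from run_snoc_delay_compensates_clock[OF det r1 r2 clocks this]
  obtain m' where "run A (w2 @ [(\<sigma>, t + d2)]) p c m'" by blast
  ultimately obtain k' where "run A ((w2 @ [(\<sigma>, t + d2)]) @ u') q' \<nu> k'"
    using run_append_same_configuration[OF det _ _ r'] by blast
  with u show ?thesis by auto
qed

lemma MQ_shift_first_eq:
  assumes "deterministic A"
    and "run A w1 q a k1" and "run A w2 q b k2" and "a + d1 = b + d2" and "u \<noteq> []"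
  shows "MQ A (w1 @ shift_first d1 u) = MQ A (w2 @ shift_first d2 u)"
proof -
  have "b + d2 = a + d1" using assms(4) by simp
  with assms show ?thesis
    unfolding MQ_def by (metis run_shift_first_transfer)
qed

lemma MQ_eq_if_same_location:
  assumes "deterministic A" and "run A w1 q \<nu>1 k1" and "run A w2 q \<nu>2 k2"
  shows "MQ A w1 = MQ A w2"
  using assms run_deterministic unfolding MQ_def by metis

lemma shift_first_0 [simp]: "shift_first 0 u = u"
  by (cases u) auto

lemma test_nonempty_suffix:
  assumes "e \<noteq> []"
  shows "test A w1 w2 i1 i2 e \<longleftrightarrow>
    MQ A (w1 @ shift_first (max 0 (nu_c w2 i2 - nu_c w1 i1)) e) =
    MQ A (w2 @ shift_first (max 0 (nu_c w1 i1 - nu_c w2 i2)) e)"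
  using assms by (simp add: test_def Let_def max_def)

theorem lemma1:
  fixes A :: "('s, 'q) ota" and w1 w2 e :: "'s timed_word" and i1 i2 :: nat
    and q1 q2 :: 'q and v1 v2 :: real
  assumes "complete_DOTA A"
    and "is_timed_word A w1" and "is_timed_word A w2" and "is_timed_word A e"
    and "run A w1 q1 v1 i1" and "run A w2 q2 v2 i2"
    and "\<not> test A w1 w2 i1 i2 e"
  shows "q1 \<noteq> q2"
proof
  assume "q1 = q2"
  have det: "deterministic A" using assms(1) by (simp add: complete_DOTA_def)
  have r1: "run A w1 q1 v1 i1" and r2: "run A w2 q1 v2 i2"
    using assms(5,6) \<open>q1 = q2\<close> by auto
  have "test A w1 w2 i1 i2 e"
  proof (cases "e = []")
    case True
    with MQ_eq_if_same_location[OF det r1 r2] show ?thesis by (simp add: test_def)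
  next
    case False
    have "v1 + max 0 (v2 - v1) = v2 + max 0 (v1 - v2)" by auto
    from MQ_shift_first_eq[OF det r1 r2 this False] False
    show ?thesis
      by (simp add: test_nonempty_suffix run_clock_eq_nu_c[OF r1, symmetric]
          run_clock_eq_nu_c[OF r2, symmetric])
  qed
  with assms(7) show False ..
qed

end
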